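(* Assume $V=L$. Let $\xi\in\Xi$, $X\in\mathrm{IPS}_\xi$, let $F:D^\xi\to\mathcal N$ be continuous, and let $\mathcal U\subseteq\bigcup_{i\in T}\mathrm{IPS}_{[\subseteq i]}$ be a countable set. Then there is $Y\in\mathrm{IPS}_\xi$ with $Y\subseteq X$ such that the image $S=F[Y]$ is $U$-avoidable on $i$ for every $i\in T$ and every $U\in\mathrm{IPS}_{[\subseteq i]}\cap\mathcal U$.
   Context: $\mathcal N=\omega^\omega$, $D=2^\omega$. $T$ is the set of all nonempty finite sequences of countable ordinals, ordered by strict extension $\subset$; $[\subseteq i]=\{j\in T:j\subseteq i\}$, $[\subset i]=\{j\in T:j\subset i\}$. $\Xi$ is the set of all at most countable $\xi\subseteq T$ closed downward under $\subset$. $D^\xi$ is the product of $\xi$ copies of $D$ with the product topology ($D^\varnothing=\{\varnothing\}$); for $\eta\subseteq\xi$, $x\restriction\eta$ is restriction and $X\restriction\eta=\{x\restriction\eta:x\in X\}$. For $\zeta\in\Xi$, $\mathrm{IPS}_\zeta$ is the set of all $X\subseteq D^\zeta$ for which there is a homeomorphism $H$ of $D^\zeta$ onto $X$ such that for all $x_0,x_1\in D^\zeta$ and all $\eta\in\Xi$, $\eta\subseteq\zeta$: $x_0\restriction\eta=x_1\restriction\eta\iff H(x_0)\restriction\eta=H(x_1)\restriction\eta$. For $V\subseteq D^\zeta$ and $i\in\zeta$, $V{\Downarrow}i=\{v(i):v\in V\}$. For $i\in T$ and $U\in\mathrm{IPS}_{[\subseteq i]}$, a set $S\subseteq\mathcal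 N$ is $U$-avoidable on $i$ if there is a set $V\subseteq U$, clopen relative to $U$, with $V\restriction[\subset i]=U\restriction[\subset i]$ and $S\cap(V{\Downarrow}i)=\varnothing$. *)

theory Defs
  imports "HOL-Analysis.Analysis" "HOL-Library.Sublist"
begin

definition cantor_top :: "(nat \<Rightarrow> bool) topology" where
  "cantor_top = product_topology (\<lambda>_. discrete_topology UNIV) UNIV"

definition baire_top :: "(nat \<Rightarrow> nat) topology" where
  "baire_top = product_topology (\<lambda>_. discrete_topology UNIV) UNIV"

text \<open>Nodes are nonempty finite sequences of labels of type 'o (in the theorem, 'o is
  a well-ordered type of order type omega_1, i.e. the countable ordinals).\<close>
definition Tnodes :: "'o list set" where
  "Tnodes = {s. s \<noteq> []}"

definition below_eq :: "'o list \<Rightarrow> 'o list set" where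
  "below_eq i = {j \<in> Tnodes. prefix j i}"

definition below :: "'o list \<Rightarrow> 'o list set" where
  "below i = {j \<in> Tnodes. strict_prefix j i}"

definition Xi :: "'o list set set" where
  "Xi = {\<xi>. \<xi> \<subseteq> Tnodes \<and> countable \<xi> \<and>
             (\<forall>i\<in>\<xi>. \<forall>j\<in>Tnodes. strict_prefix j i \<longrightarrow> j \<in> \<xi>)}"

definition Dpow :: "'o list set \<Rightarrow> ('o list \<Rightarrow> nat \<Rightarrow> bool) topology" where
  "Dpow \<zeta> = product_topology (\<lambda>_. cantor_top) \<zeta>"

definition IPS :: "'o list set \<Rightarrow> ('o list \<Rightarrow> nat \<Rightarrow> bool) set set" where
  "IPS \<zeta> = {X. X \<subseteq> topspace (Dpow \<zeta>) \<and>
     (\<exists>H. homeomorphic_map (Dpow \<zeta>) (subtopology (Dpow \<zeta>) X) H \<and>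
          (\<forall>x0\<in>topspace (Dpow \<zeta>). \<forall>x1\<in>topspace (Dpow \<zeta>). \<forall>\<eta>\<in>Xi. \<eta> \<subseteq> \<zeta> \<longrightarrow>
             (restrict x0 \<eta> = restrict x1 \<eta> \<longleftrightarrow> restrict (H x0) \<eta> = restrict (H x1) \<eta>)))}"

text \<open>V Downarrow i, viewed inside the Baire space via the standard inclusion 2^omega \<subseteq> omega^omega.\<close>
definition proj_at :: "('o list \<Rightarrow> nat \<Rightarrow> bool) set \<Rightarrow> 'o list \<Rightarrow> (nat \<Rightarrow> nat) set" where
  "proj_at V i = (\<lambda>v. \<lambda>n. of_bool (v i n)) ` V"

definition avoidable ::
  "(nat \<Rightarrow> nat) set \<Rightarrow> ('o list \<Rightarrow> nat \<Rightarrow> bool) set \<Rightarrow> 'o list \<Rightarrow> bool" where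
  "avoidable S U i \<longleftrightarrow>
     (\<exists>V. V \<subseteq> U \<and> openin (subtopology (Dpow (below_eq i)) U) V
          \<and> closedin (subtopology (Dpow (below_eq i)) U) V
          \<and> (\<lambda>v. restrict v (below i)) ` V = (\<lambda>u. restrict u (below i)) ` U
          \<and> S \<inter> proj_at V i = {})"

end

theory Submission
  imports Defs
begin

text \<open>
  Enumerate \<U> as U_0, U_1, ..., with U_k living on the node i_k. The fibres of U_k over a
  fixed restriction to the strict predecessors of i_k are copies of the Cantor space that
  depend continuously on the base point, so by compactness a single length m_k works for all
  of them: every fibre realises more than 2^k initial segments of length m_k in the
  coordinate i_k. Hence a set S with at most 2^k such initial segments is U_k-avoidable:
  discard from U_k the points whose i_k-th coordinate begins like an element of S.

  It remains to shrink X to an IPS set Y on which F has at most 2^k initial segments of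
  length m_k, for all k at once. By uniform continuity the first m_k values of F only depend
  on the first B_k bits of every coordinate. Spreading the bits of all coordinates to
  positions \<sigma>(c), with \<sigma>(c) > B_k whenever c \<ge> k, is a coordinatewise embedding after which
  these bits carry only k bits of information.
\<close>

section \<open>Initial segments\<close>

definition initial_segment :: "nat \<Rightarrow> (nat \<Rightarrow> 'a) \<Rightarrow> 'a list" where
  "initial_segment m s = map s [0..<m]"

lemma initial_segment_eq_iff: "initial_segment m s = initial_segment m s' \<longleftrightarrow> (\<forall>n<m. s n = s' n)"
  by (auto simp: initial_segment_def map_eq_conv)

lemma inj_on_initial_segment_mono:
  assumes "inj_on (\<lambda>a. initial_segment m (s a)) A" "m \<le> m'"
  shows "inj_on (\<lambda>a. initial_segment m' (s a)) A"
  using assms by (auto simp: inj_on_def initial_segment_eq_iff)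

lemma eventually_inj_on_initial_segment:
  assumes "finite A" "inj_on s A"
  shows "\<forall>\<^sub>F m in sequentially. inj_on (\<lambda>a. initial_segment m (s a)) A"
proof -
  have "\<forall>\<^sub>F m in sequentially. s a \<noteq> s b \<longrightarrow> initial_segment m (s a) \<noteq> initial_segment m (s b)" for a b
  proof (cases "s a = s b")
    case False
    then obtain n where "s a n \<noteq> s b n" by auto
    then show ?thesis
      by (intro eventually_sequentiallyI[of "Suc n"]) (auto simp: initial_segment_eq_iff)
  qed simp
  then have "\<forall>\<^sub>F m in sequentially. \<forall>(a, b)\<in>A \<times> A. s a \<noteq> s b \<longrightarrow> initial_segment m (s a) \<noteq> initial_segment m (s b)"
    using assms(1) by (subst eventually_ball_finite_distrib) auto
  then show ?thesis
    by eventually_elim (use assms(2) in \<open>auto simp: inj_on_def\<close>)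
qed

lemma finite_initial_segments_proj_at: "finite (initial_segment m ` proj_at V i)"
proof (rule finite_subset)
  show "initial_segment m ` proj_at V i \<subseteq> {xs. set xs \<subseteq> {0, 1} \<and> length xs = m}"
    by (auto simp: initial_segment_def proj_at_def)
qed (simp add: finite_lists_length_eq)

section \<open>Compactness\<close>

lemma openin_finitely_determined:
  assumes "finite I" "\<And>k. k \<in> I \<Longrightarrow> continuous_map X (discrete_topology UNIV) (g k)"
    and "S \<subseteq> topspace X"
    and "\<And>x x'. x \<in> S \<Longrightarrow> x' \<in> topspace X \<Longrightarrow> \<forall>k\<in>I. g k x' = g k x \<Longrightarrow> x' \<in> S"
  shows "openin X S"
proof (subst openin_subopen, intro ballI)
  fix x assume "x \<in> S"
  let ?T = "(\<Inter>k\<in>I. {x' \<in> topspace X. g k x' \<in> {g k x}}) \<inter> topspace X"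
  have "openin X ?T"
    using assms(1,2) by (intro openin_INT openin_continuous_map_preimage) auto
  moreover have "x \<in> ?T" "?T \<subseteq> S"
    using \<open>x \<in> S\<close> assms(3,4) by auto
  ultimately show "\<exists>T. openin X T \<and> x \<in> T \<and> T \<subseteq> S" by blast
qed

lemma compact_space_directed_cover:
  assumes "compact_space X" "\<And>k. k \<in> K \<Longrightarrow> openin X (W k)" "topspace X \<subseteq> (\<Union>k\<in>K. W k)"
    and "\<And>F. finite F \<Longrightarrow> F \<subseteq> K \<Longrightarrow> \<exists>k\<in>K. (\<Union>f\<in>F. W f) \<subseteq> W k"
  shows "\<exists>k\<in>K. topspace X \<subseteq> W k"
proof -
  have "(\<forall>U\<in>W ` K. openin X U) \<and> topspace X \<subseteq> \<Union>(W ` K)"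
    using assms(2,3) by auto
  from assms(1)[unfolded compact_space_alt, rule_format, OF this]
  obtain \<F> where \<F>: "finite \<F>" "\<F> \<subseteq> W ` K" "topspace X \<subseteq> \<Union>\<F>"
    by blast
  obtain F where "F \<subseteq> K" "finite F" "\<F> = W ` F"
    using finite_subset_image[OF \<F>(1,2)] by blast
  with assms(4) \<F>(3) show ?thesis by (meson order.trans)
qed

lemma compact_space_increasing_cover:
  fixes W :: "nat \<Rightarrow> 'a set"
  assumes "compact_space X" "\<And>m. openin X (W m)" "mono W" "topspace X \<subseteq> (\<Union>m. W m)"
  shows "\<exists>m. topspace X \<subseteq> W m"
proof -
  have "(\<Union>f\<in>F. W f) \<subseteq> W (Max (insert 0 F))" if "finite F" for F :: "nat set"
    using that monoD[OF assms(3)] by (simp add: UN_least)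
  then show ?thesis
    using compact_space_directed_cover[of X UNIV W] assms(1,2,4) by blast
qed

lemma uniform_inj_on_initial_segment:
  assumes "compact_space X" "finite A"
    and "\<And>a n. continuous_map X (discrete_topology UNIV) (\<lambda>x. \<psi> x a n)"
    and "\<And>x. x \<in> topspace X \<Longrightarrow> inj_on (\<psi> x) A"
  obtains m where "\<And>x. x \<in> topspace X \<Longrightarrow> inj_on (\<lambda>a. initial_segment m (\<psi> x a)) A"
proof -
  define W where "W m = {x \<in> topspace X. inj_on (\<lambda>a. initial_segment m (\<psi> x a)) A}" for m
  have "\<exists>m. topspace X \<subseteq> W m"
  proof (rule compact_space_increasing_cover[OF assms(1)])
    fix m
    show "openin X (W m)"
    proof (rule openin_finitely_determined[of "A \<times> {..<m}" _ "\<lambda>k x. \<psi> x (fst k) (snd k)"])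
      fix x x' assume x: "x \<in> W m" and x': "x' \<in> topspace X"
        and agree: "\<forall>k\<in>A \<times> {..<m}. \<psi> x' (fst k) (snd k) = \<psi> x (fst k) (snd k)"
      have "\<forall>a\<in>A. initial_segment m (\<psi> x' a) = initial_segment m (\<psi> x a)"
        using agree by (auto simp: initial_segment_eq_iff)
      then show "x' \<in> W m"
        using x x' unfolding W_def inj_on_def by simp
    qed (use assms(2,3) in \<open>simp_all add: W_def\<close>)
  next
    show "mono W"
      unfolding W_def by (rule monoI) (blast intro: inj_on_initial_segment_mono)
  next
    show "topspace X \<subseteq> (\<Union>m. W m)"
    proof
      fix x assume "x \<in> topspace X"
      then have "\<forall>\<^sub>F m in sequentially. inj_on (\<lambda>a. initial_segment m (\<psi> x a)) A"
        by (intro eventually_inj_on_initial_segment assms(2,4))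
      then obtain m where "inj_on (\<lambda>a. initial_segment m (\<psi> x a)) A"
        by (auto simp: eventually_sequentially)
      then show "x \<in> (\<Union>m. W m)" using \<open>x \<in> topspace X\<close> by (auto simp: W_def)
    qed
  qed
  then obtain m where "topspace X \<subseteq> W m" ..
  then show ?thesis using that unfolding W_def by blast
qed

section \<open>Cantor cubes\<close>

lemma topspace_cantor [simp]: "topspace cantor_top = UNIV"
  by (simp add: cantor_top_def)

lemma topspace_Dpow: "topspace (Dpow \<zeta>) = (\<Pi>\<^sub>E j\<in>\<zeta>. UNIV)"
  by (simp add: Dpow_def)

lemma compact_space_Dpow: "compact_space (Dpow \<zeta>)"
  by (simp add: Dpow_def cantor_top_def compact_space_product_topology compact_space_discrete_topology)

lemma Hausdorff_space_Dpow: "Hausdorff_space (Dpow \<zeta>)"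
  by (simp add: Dpow_def cantor_top_def Hausdorff_space_product_topology)

lemma continuous_map_cantor_iff:
  "continuous_map X cantor_top f \<longleftrightarrow> (\<forall>n. continuous_map X (discrete_topology UNIV) (\<lambda>x. f x n))"
  by (simp add: cantor_top_def continuous_map_componentwise_UNIV)

lemma continuous_map_baire_iff:
  "continuous_map X baire_top f \<longleftrightarrow> (\<forall>n. continuous_map X (discrete_topology UNIV) (\<lambda>x. f x n))"
  by (simp add: baire_top_def continuous_map_componentwise_UNIV)

lemma continuous_map_Dpow_bit:
  "j \<in> \<zeta> \<Longrightarrow> continuous_map (Dpow \<zeta>) (discrete_topology UNIV) (\<lambda>x. x j n)"
  using continuous_map_product_projection[of j \<zeta> "\<lambda>_. cantor_top"]
  by (simp add: Dpow_def continuous_map_cantor_iff)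

lemma update_in_topspace_Dpow:
  "x \<in> topspace (Dpow \<zeta>) \<Longrightarrow> i \<in> \<zeta> \<Longrightarrow> x(i := y) \<in> topspace (Dpow \<zeta>)"
  by (auto simp: topspace_Dpow PiE_iff extensional_def)

lemma continuous_map_Dpow_update:
  assumes "i \<in> \<zeta>"
  shows "continuous_map (Dpow \<zeta>) (Dpow \<zeta>) (\<lambda>x. x(i := y))"
  unfolding Dpow_def continuous_map_componentwise
proof (intro conjI ballI)
  show "(\<lambda>x. x(i := y)) ` topspace (product_topology (\<lambda>_. cantor_top) \<zeta>) \<subseteq> extensional \<zeta>"
    using assms by (auto simp: PiE_iff extensional_def)
next
  fix k assume "k \<in> \<zeta>"
  then show "continuous_map (product_topology (\<lambda>_. cantor_top) \<zeta>) cantor_top (\<lambda>x. (x(i := y)) k)"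
    using continuous_map_product_projection[of k \<zeta> "\<lambda>_. cantor_top"] by (cases "k = i") simp_all
qed

lemma cantor_neighbourhood:
  assumes "openin cantor_top W" "y \<in> W"
  obtains I where "finite I" "\<And>y'. \<forall>n\<in>I. y' n = y n \<Longrightarrow> y' \<in> W"
proof -
  obtain U where U: "finite {n. U n \<noteq> UNIV}" "y \<in> (\<Pi>\<^sub>E n\<in>UNIV. U n)" "(\<Pi>\<^sub>E n\<in>UNIV. U n) \<subseteq> W"
    using assms unfolding cantor_top_def openin_product_topology_alt by auto
  show ?thesis
  proof (rule that[OF U(1)])
    fix y' assume y': "\<forall>n\<in>{n. U n \<noteq> UNIV}. y' n = y n"
    have "y' n \<in> U n" for n
      using y' U(2) by (cases "U n = UNIV") auto
    then show "y' \<in> W" using U(3) by auto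
  qed
qed

lemma Dpow_neighbourhood:
  assumes "openin (Dpow \<zeta>) S" "x \<in> S"
  obtains I where "finite I" "I \<subseteq> \<zeta> \<times> UNIV"
    "\<And>x'. x' \<in> topspace (Dpow \<zeta>) \<Longrightarrow> \<forall>(j, n)\<in>I. x' j n = x j n \<Longrightarrow> x' \<in> S"
proof -
  obtain U where U: "finite {j \<in> \<zeta>. U j \<noteq> UNIV}" "\<And>j. j \<in> \<zeta> \<Longrightarrow> openin cantor_top (U j)"
    "x \<in> (\<Pi>\<^sub>E j\<in>\<zeta>. U j)" "(\<Pi>\<^sub>E j\<in>\<zeta>. U j) \<subseteq> S"
    using assms unfolding Dpow_def openin_product_topology_alt by auto
  define J where "J = {j \<in> \<zeta>. U j \<noteq> UNIV}"
  have "\<forall>j\<in>J. \<exists>I. finite I \<and> (\<forall>y'. (\<forall>n\<in>I. y' n = x j n) \<longrightarrow> y' \<in> U j)"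
  proof
    fix j assume "j \<in> J"
    then have "openin cantor_top (U j)" "x j \<in> U j" using U(2,3) by (auto simp: J_def)
    then obtain I where "finite I" "\<And>y'. \<forall>n\<in>I. y' n = x j n \<Longrightarrow> y' \<in> U j"
      using cantor_neighbourhood by blast
    then show "\<exists>I. finite I \<and> (\<forall>y'. (\<forall>n\<in>I. y' n = x j n) \<longrightarrow> y' \<in> U j)" by blast
  qed
  then obtain I where I: "\<And>j. j \<in> J \<Longrightarrow> finite (I j)"
    "\<And>j y'. j \<in> J \<Longrightarrow> \<forall>n\<in>I j. y' n = x j n \<Longrightarrow> y' \<in> U j"
    by metis
  show ?thesis
  proof (rule that[of "Sigma J I"])
    show "finite (Sigma J I)" using U(1) I(1) unfolding J_def by (rule finite_SigmaI)
    show "Sigma J I \<subseteq> \<zeta> \<times> UNIV" by (auto simp: J_def)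
    fix x' assume x': "x' \<in> topspace (Dpow \<zeta>)" "\<forall>(j, n)\<in>Sigma J I. x' j n = x j n"
    have "x' j \<in> U j" if "j \<in> \<zeta>" for j
    proof (cases "j \<in> J")
      case True
      then show ?thesis using x'(2) I(2) by auto
    next
      case False
      then show ?thesis using that by (auto simp: J_def)
    qed
    then have "x' \<in> (\<Pi>\<^sub>E j\<in>\<zeta>. U j)"
      using x'(1) by (auto simp: topspace_Dpow PiE_iff)
    then show "x' \<in> S" using U(4) by blast
  qed
qed

lemma openin_Dpow_determined_on:
  assumes "finite I" "I \<subseteq> \<zeta> \<times> UNIV"
  shows "openin (Dpow \<zeta>)
    {x \<in> topspace (Dpow \<zeta>). \<forall>x'\<in>topspace (Dpow \<zeta>). (\<forall>(j, b)\<in>I. x' j b = x j b) \<longrightarrow> P x' = P x}"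
    (is "openin _ ?W")
proof (rule openin_finitely_determined[of I _ "\<lambda>k x. x (fst k) (snd k)"])
  fix x x' assume x: "x \<in> ?W" and x': "x' \<in> topspace (Dpow \<zeta>)"
    and agree: "\<forall>k\<in>I. x' (fst k) (snd k) = x (fst k) (snd k)"
  have near_x: "P y = P x" if "y \<in> topspace (Dpow \<zeta>)" "\<forall>(j, b)\<in>I. y j b = x j b" for y
    using x that by blast
  have "P x'' = P x'" if "x'' \<in> topspace (Dpow \<zeta>)" "\<forall>(j, b)\<in>I. x'' j b = x' j b" for x''
    using near_x[OF that(1)] near_x[OF x'] that(2) agree by (simp add: case_prod_beta)
  then show "x' \<in> ?W" using x' by blast
next
  fix k assume "k \<in> I"
  then have "fst k \<in> \<zeta>" using assms(2) by auto
  then show "continuous_map (Dpow \<zeta>) (discrete_topology UNIV) (\<lambda>x. x (fst k) (snd k))"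
    by (rule continuous_map_Dpow_bit)
qed (use assms(1) in auto)

lemma Dpow_locally_determined:
  assumes "continuous_map (Dpow \<zeta>) baire_top f" "x \<in> topspace (Dpow \<zeta>)"
  obtains I where "finite I" "I \<subseteq> \<zeta> \<times> UNIV"
    "\<And>x'. x' \<in> topspace (Dpow \<zeta>) \<Longrightarrow> \<forall>(j, b)\<in>I. x' j b = x j b \<Longrightarrow>
       initial_segment L (f x') = initial_segment L (f x)"
proof -
  have "openin (Dpow \<zeta>) {x' \<in> topspace (Dpow \<zeta>). initial_segment L (f x') = initial_segment L (f x)}"
    using assms(1) unfolding continuous_map_baire_iff
    by (intro openin_finitely_determined[of "{..<L}" _ "\<lambda>n x. f x n"]) (auto simp: initial_segment_eq_iff)
  moreover have "x \<in> {x' \<in> topspace (Dpow \<zeta>). initial_segment L (f x') = initial_segment L (f x)}"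
    using assms(2) by simp
  ultimately obtain I where "finite I" "I \<subseteq> \<zeta> \<times> UNIV"
    "\<And>x'. x' \<in> topspace (Dpow \<zeta>) \<Longrightarrow> \<forall>(j, b)\<in>I. x' j b = x j b \<Longrightarrow>
       x' \<in> {x' \<in> topspace (Dpow \<zeta>). initial_segment L (f x') = initial_segment L (f x)}"
    by (rule Dpow_neighbourhood) blast
  then show ?thesis using that by blast
qed

lemma Dpow_uniformly_continuous:
  assumes "continuous_map (Dpow \<zeta>) baire_top f"
  obtains B where "\<And>x x'. x \<in> topspace (Dpow \<zeta>) \<Longrightarrow> x' \<in> topspace (Dpow \<zeta>) \<Longrightarrow>
      \<forall>j\<in>\<zeta>. \<forall>b\<le>B. x' j b = x j b \<Longrightarrow> initial_segment L (f x') = initial_segment L (f x)"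
proof -
  define W where "W I = {x \<in> topspace (Dpow \<zeta>). \<forall>x'\<in>topspace (Dpow \<zeta>).
      (\<forall>(j, b)\<in>I. x' j b = x j b) \<longrightarrow> initial_segment L (f x') = initial_segment L (f x)}" for I
  define K where "K = {I. finite I \<and> I \<subseteq> \<zeta> \<times> (UNIV :: nat set)}"
  have "\<exists>I\<in>K. topspace (Dpow \<zeta>) \<subseteq> W I"
  proof (rule compact_space_directed_cover[OF compact_space_Dpow])
    show "openin (Dpow \<zeta>) (W I)" if "I \<in> K" for I
      using that unfolding K_def W_def by (intro openin_Dpow_determined_on) auto
  next
    show "topspace (Dpow \<zeta>) \<subseteq> (\<Union>I\<in>K. W I)"
    proof
      fix x assume x: "x \<in> topspace (Dpow \<zeta>)"
      obtain I where I: "finite I" "I \<subseteq> \<zeta> \<times> UNIV"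
        "\<And>x'. x' \<in> topspace (Dpow \<zeta>) \<Longrightarrow> \<forall>(j, b)\<in>I. x' j b = x j b \<Longrightarrow>
           initial_segment L (f x') = initial_segment L (f x)"
        using assms x by (rule Dpow_locally_determined) blast
      have "I \<in> K" using I(1,2) by (simp add: K_def)
      moreover have "x \<in> W I" using x I(3) unfolding W_def by blast
      ultimately show "x \<in> (\<Union>I\<in>K. W I)" by blast
    qed
  next
    fix F assume "finite F" "F \<subseteq> K"
    then have "\<Union>F \<in> K" unfolding K_def by auto
    moreover have "W I \<subseteq> W (\<Union>F)" if "I \<in> F" for I
      using that unfolding W_def by blast
    ultimately show "\<exists>I\<in>K. (\<Union>I\<in>F. W I) \<subseteq> W I" by blast
  qed
  then obtain I where I: "finite I" "I \<subseteq> \<zeta> \<times> UNIV" "topspace (Dpow \<zeta>) \<subseteq> W I"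
    unfolding K_def by blast
  show ?thesis
  proof (rule that[of "Max (insert 0 (snd ` I))"])
    fix x x' assume x: "x \<in> topspace (Dpow \<zeta>)" and x': "x' \<in> topspace (Dpow \<zeta>)"
      and agree: "\<forall>j\<in>\<zeta>. \<forall>b\<le>Max (insert 0 (snd ` I)). x' j b = x j b"
    have "j \<in> \<zeta> \<and> b \<le> Max (insert 0 (snd ` I))" if "(j, b) \<in> I" for j b
      using that I(1,2) by (auto intro: Max_ge simp: rev_image_eqI)
    then have "\<forall>(j, b)\<in>I. x' j b = x j b" using agree by blast
    then show "initial_segment L (f x') = initial_segment L (f x)"
      using I(3) x x' unfolding W_def by blast
  qed
qed

section \<open>Restriction-preserving embeddings\<close>

lemma below_eq_in_Xi: "i \<in> Tnodes \<Longrightarrow> below_eq i \<in> Xi"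
proof -
  have "below_eq i \<subseteq> set (prefixes i)" unfolding below_eq_def by auto
  then have "countable (below_eq i)" by (meson countable_finite finite_set finite_subset)
  then show ?thesis unfolding Xi_def below_eq_def
    by (auto dest: prefix_order.less_imp_le intro: prefix_order.order_trans)
qed

lemma below_in_Xi: "i \<in> Tnodes \<Longrightarrow> below i \<in> Xi"
proof -
  have "below i \<subseteq> set (prefixes i)" unfolding below_def by auto
  then have "countable (below i)" by (meson countable_finite finite_set finite_subset)
  then show ?thesis unfolding Xi_def below_def
    by (auto intro: prefix_order.less_trans)
qed

lemma below_eq_eq_insert_below: "i \<in> Tnodes \<Longrightarrow> below_eq i = insert i (below i)"
  unfolding below_eq_def below_def by (auto simp: strict_prefix_def)

lemma not_in_below [simp]: "i \<notin> below i"
  unfolding below_def by auto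

definition restriction_preserving ::
  "'o list set \<Rightarrow> (('o list \<Rightarrow> nat \<Rightarrow> bool) \<Rightarrow> 'o list \<Rightarrow> nat \<Rightarrow> bool) \<Rightarrow> bool" where
  "restriction_preserving \<zeta> H \<longleftrightarrow>
     (\<forall>x0\<in>topspace (Dpow \<zeta>). \<forall>x1\<in>topspace (Dpow \<zeta>). \<forall>\<eta>\<in>Xi. \<eta> \<subseteq> \<zeta> \<longrightarrow>
        (restrict x0 \<eta> = restrict x1 \<eta> \<longleftrightarrow> restrict (H x0) \<eta> = restrict (H x1) \<eta>))"

lemma restriction_preservingD:
  "restriction_preserving \<zeta> H \<Longrightarrow> x0 \<in> topspace (Dpow \<zeta>) \<Longrightarrow> x1 \<in> topspace (Dpow \<zeta>) \<Longrightarrow>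
    \<eta> \<in> Xi \<Longrightarrow> \<eta> \<subseteq> \<zeta> \<Longrightarrow> restrict (H x0) \<eta> = restrict (H x1) \<eta> \<longleftrightarrow> restrict x0 \<eta> = restrict x1 \<eta>"
  unfolding restriction_preserving_def by blast

definition IPS_embedding ::
  "'o list set \<Rightarrow> (('o list \<Rightarrow> nat \<Rightarrow> bool) \<Rightarrow> 'o list \<Rightarrow> nat \<Rightarrow> bool) \<Rightarrow> bool" where
  "IPS_embedding \<zeta> H \<longleftrightarrow>
     continuous_map (Dpow \<zeta>) (Dpow \<zeta>) H \<and> inj_on H (topspace (Dpow \<zeta>)) \<and> restriction_preserving \<zeta> H"

lemma IPS_iff_embedding_image: "X \<in> IPS \<zeta> \<longleftrightarrow> (\<exists>H. IPS_embedding \<zeta> H \<and> X = H ` topspace (Dpow \<zeta>))"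
proof
  assume "X \<in> IPS \<zeta>"
  then obtain H where H: "homeomorphic_map (Dpow \<zeta>) (subtopology (Dpow \<zeta>) X) H"
    "restriction_preserving \<zeta> H" and X: "X \<subseteq> topspace (Dpow \<zeta>)"
    unfolding IPS_def restriction_preserving_def by blast
  have "continuous_map (Dpow \<zeta>) (Dpow \<zeta>) H"
    using homeomorphic_imp_continuous_map[OF H(1)] by (simp add: continuous_map_in_subtopology)
  moreover have "H ` topspace (Dpow \<zeta>) = X"
    using homeomorphic_imp_surjective_map[OF H(1)] X by (simp add: Int_absorb1)
  ultimately show "\<exists>H. IPS_embedding \<zeta> H \<and> X = H ` topspace (Dpow \<zeta>)"
    using H homeomorphic_imp_injective_map unfolding IPS_embedding_def by blast
next
  assume "\<exists>H. IPS_embedding \<zeta> H \<and> X = H ` topspace (Dpow \<zeta>)"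
  then obtain H where H: "continuous_map (Dpow \<zeta>) (Dpow \<zeta>) H" "inj_on H (topspace (Dpow \<zeta>))"
    "restriction_preserving \<zeta> H" and X: "X = H ` topspace (Dpow \<zeta>)"
    unfolding IPS_embedding_def by blast
  have X_sub: "X \<subseteq> topspace (Dpow \<zeta>)"
    using H(1) unfolding X by (rule continuous_map_image_subset_topspace)
  have "homeomorphic_map (Dpow \<zeta>) (subtopology (Dpow \<zeta>) X) H"
  proof (rule continuous_imp_homeomorphic_map)
    show "continuous_map (Dpow \<zeta>) (subtopology (Dpow \<zeta>) X) H"
      using H(1) by (simp add: continuous_map_in_subtopology X)
  qed (use X_sub H(2) X in \<open>auto simp: compact_space_Dpow Hausdorff_space_subtopology Hausdorff_space_Dpow\<close>)
  then show "X \<in> IPS \<zeta>"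
    using X_sub H(3) unfolding IPS_def restriction_preserving_def by blast
qed

lemma IPS_embedding_comp:
  assumes "IPS_embedding \<zeta> H" "IPS_embedding \<zeta> G"
  shows "IPS_embedding \<zeta> (H \<circ> G)"
proof -
  have H: "continuous_map (Dpow \<zeta>) (Dpow \<zeta>) H" "inj_on H (topspace (Dpow \<zeta>))" "restriction_preserving \<zeta> H"
    and G: "continuous_map (Dpow \<zeta>) (Dpow \<zeta>) G" "inj_on G (topspace (Dpow \<zeta>))" "restriction_preserving \<zeta> G"
    using assms by (simp_all add: IPS_embedding_def)
  have G_top: "G ` topspace (Dpow \<zeta>) \<subseteq> topspace (Dpow \<zeta>)"
    using G(1) by (rule continuous_map_image_subset_topspace)
  have "continuous_map (Dpow \<zeta>) (Dpow \<zeta>) (H \<circ> G)"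
    using G(1) H(1) by (rule continuous_map_compose)
  moreover have "inj_on (H \<circ> G) (topspace (Dpow \<zeta>))"
    using G(2) inj_on_subset[OF H(2) G_top] by (rule comp_inj_on)
  moreover have "restriction_preserving \<zeta> (H \<circ> G)"
    unfolding restriction_preserving_def
  proof (intro ballI impI)
    fix x0 x1 \<eta> assume x: "x0 \<in> topspace (Dpow \<zeta>)" "x1 \<in> topspace (Dpow \<zeta>)" and \<eta>: "\<eta> \<in> Xi" "\<eta> \<subseteq> \<zeta>"
    then have "G x0 \<in> topspace (Dpow \<zeta>)" "G x1 \<in> topspace (Dpow \<zeta>)"
      using G_top by auto
    then show "restrict x0 \<eta> = restrict x1 \<eta> \<longleftrightarrow> restrict ((H \<circ> G) x0) \<eta> = restrict ((H \<circ> G) x1) \<eta>"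
      using restriction_preservingD[OF H(3) _ _ \<eta>] restriction_preservingD[OF G(3) x \<eta>] by simp
  qed
  ultimately show ?thesis by (simp add: IPS_embedding_def)
qed

lemma restrict_eq_restrict_iff: "restrict f A = restrict g A \<longleftrightarrow> (\<forall>x\<in>A. f x = g x)"
  by (auto simp: restrict_def fun_eq_iff)

lemma coordinatewise_map_Dpow:
  assumes cont: "\<And>j. j \<in> \<zeta> \<Longrightarrow> continuous_map cantor_top cantor_top (g j)"
    and inj: "\<And>j. j \<in> \<zeta> \<Longrightarrow> inj (g j)"
  shows "IPS_embedding \<zeta> (\<lambda>x. \<lambda>j\<in>\<zeta>. g j (x j))"
proof -
  define G where "G = (\<lambda>x. \<lambda>j\<in>\<zeta>. g j (x j))"
  have agree_iff: "(\<forall>j\<in>\<eta>. G x0 j = G x1 j) \<longleftrightarrow> (\<forall>j\<in>\<eta>. x0 j = x1 j)" if "\<eta> \<subseteq> \<zeta>" for x0 x1 \<eta>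
    using that inj by (auto simp: G_def inj_eq)
  have "continuous_map (Dpow \<zeta>) (Dpow \<zeta>) G"
    unfolding Dpow_def continuous_map_componentwise
  proof (intro conjI ballI)
    show "G ` topspace (product_topology (\<lambda>_. cantor_top) \<zeta>) \<subseteq> extensional \<zeta>"
      by (auto simp: G_def)
  next
    fix j assume "j \<in> \<zeta>"
    then show "continuous_map (product_topology (\<lambda>_. cantor_top) \<zeta>) cantor_top (\<lambda>x. G x j)"
      using continuous_map_compose[OF continuous_map_product_projection[of j \<zeta> "\<lambda>_. cantor_top"] cont[of j]]
      by (simp add: G_def o_def)
  qed
  moreover have "inj_on G (topspace (Dpow \<zeta>))"
  proof (rule inj_onI)
    fix x0 x1 assume x: "x0 \<in> topspace (Dpow \<zeta>)" "x1 \<in> topspace (Dpow \<zeta>)" and "G x0 = G x1"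
    then have "\<forall>j\<in>\<zeta>. x0 j = x1 j" using agree_iff[OF order_refl] by metis
    then show "x0 = x1" using x unfolding topspace_Dpow by (intro PiE_ext) auto
  qed
  moreover have "restriction_preserving \<zeta> G"
    using agree_iff by (simp add: restriction_preserving_def restrict_eq_restrict_iff)
  ultimately show ?thesis unfolding IPS_embedding_def G_def[symmetric] by blast
qed

section \<open>Fibres over the top node\<close>

lemma restriction_preserving_update_top:
  assumes i: "i \<in> Tnodes" and H: "restriction_preserving (below_eq i) H"
    and x: "x \<in> topspace (Dpow (below_eq i))"
  shows "restrict (H (x(i := y))) (below i) = restrict (H x) (below i)"
    and "inj (\<lambda>y. H (x(i := y)) i)"
proof -
  have top: "x(i := y) \<in> topspace (Dpow (below_eq i))" for y
    using update_in_topspace_Dpow[OF x] i by (simp add: below_eq_def)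
  have below_sub: "below i \<subseteq> below_eq i"
    using below_eq_eq_insert_below[OF i] by blast
  have "restrict (x(i := y)) (below i) = restrict x (below i)" for y
    by (auto simp: restrict_def)
  then show below: "restrict (H (x(i := y))) (below i) = restrict (H x) (below i)" for y
    using restriction_preservingD[OF H top x below_in_Xi[OF i] below_sub] by blast
  show "inj (\<lambda>y. H (x(i := y)) i)"
  proof (rule injI)
    fix y y' assume eq: "H (x(i := y)) i = H (x(i := y')) i"
    have eq_below: "restrict (H (x(i := y))) (below i) = restrict (H (x(i := y'))) (below i)"
      using below[of y] below[of y'] by simp
    have "restrict (H (x(i := y))) (below_eq i) = restrict (H (x(i := y'))) (below_eq i)"
    proof
      fix j
      show "restrict (H (x(i := y))) (below_eq i) j = restrict (H (x(i := y'))) (below_eq i) j"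
        using fun_cong[OF eq_below, of j] eq unfolding below_eq_eq_insert_below[OF i]
        by (simp split: if_splits)
    qed
    then have "restrict (x(i := y)) (below_eq i) = restrict (x(i := y')) (below_eq i)"
      using restriction_preservingD[OF H top top below_eq_in_Xi[OF i] order_refl] by blast
    then show "y = y'"
      using i by (auto simp: restrict_def fun_eq_iff below_eq_def split: if_splits)
  qed
qed

definition fiber ::
  "('o list \<Rightarrow> nat \<Rightarrow> bool) set \<Rightarrow> 'o list \<Rightarrow> ('o list \<Rightarrow> nat \<Rightarrow> bool) \<Rightarrow> ('o list \<Rightarrow> nat \<Rightarrow> bool) set" where
  "fiber U i u = {v \<in> U. restrict v (below i) = restrict u (below i)}"

lemma uniform_inj_on_initial_segment_update_top:
  assumes i: "i \<in> Tnodes" and H: "continuous_map (Dpow (below_eq i)) (Dpow (below_eq i)) H"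
    "restriction_preserving (below_eq i) H" and Y: "finite Y"
  obtains m where "\<And>x. x \<in> topspace (Dpow (below_eq i)) \<Longrightarrow>
    inj_on (\<lambda>y. initial_segment m (\<lambda>n. of_bool (H (x(i := y)) i n) :: nat)) Y"
proof (rule uniform_inj_on_initial_segment[OF compact_space_Dpow Y])
  have i_in: "i \<in> below_eq i" using i by (simp add: below_eq_def)
  have "continuous_map (Dpow (below_eq i)) (discrete_topology UNIV) (\<lambda>x. H (x(i := y)) i n)" for y n
    using continuous_map_compose[OF continuous_map_compose[OF continuous_map_Dpow_update[OF i_in] H(1)]
        continuous_map_Dpow_bit[OF i_in]]
    by (simp add: o_def)
  then show "continuous_map (Dpow (below_eq i)) (discrete_topology UNIV) (\<lambda>x. of_bool (H (x(i := y)) i n) :: nat)"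
    for y n by (rule continuous_map_compose[where g = of_bool, unfolded o_def]) simp
next
  fix x assume "x \<in> topspace (Dpow (below_eq i))"
  then have "inj (\<lambda>y. H (x(i := y)) i)"
    by (rule restriction_preserving_update_top(2)[OF i H(2)])
  then show "inj_on (\<lambda>y n. of_bool (H (x(i := y)) i n) :: nat) Y"
    by (simp add: inj_on_def fun_eq_iff of_bool_eq_iff)
qed blast

lemma IPS_fiber_initial_segments_card_gt:
  assumes i: "i \<in> Tnodes" and U: "U \<in> IPS (below_eq i)"
  obtains m where "\<And>u. u \<in> U \<Longrightarrow> N < card (initial_segment m ` proj_at (fiber U i u) i)"
proof -
  obtain H where H: "continuous_map (Dpow (below_eq i)) (Dpow (below_eq i)) H"
    "restriction_preserving (below_eq i) H" "H ` topspace (Dpow (below_eq i)) = U"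
    using U unfolding IPS_iff_embedding_image IPS_embedding_def by blast
  define Y where "Y = (\<lambda>a n. n = a) ` {..N}"
  have Y_card: "card Y = Suc N"
    unfolding Y_def by (subst card_image) (auto simp: inj_on_def fun_eq_iff)
  have "finite Y" unfolding Y_def by simp
  then obtain m where m: "\<And>x. x \<in> topspace (Dpow (below_eq i)) \<Longrightarrow>
      inj_on (\<lambda>y. initial_segment m (\<lambda>n. of_bool (H (x(i := y)) i n) :: nat)) Y"
    by (rule uniform_inj_on_initial_segment_update_top[OF i H(1,2)]) blast
  show ?thesis
  proof (rule that[of m])
    fix u assume "u \<in> U"
    then obtain x where x: "x \<in> topspace (Dpow (below_eq i))" and u: "u = H x"
      using H(3) by blast
    have "H (x(i := y)) \<in> fiber U i u" for y
    proof -
      have "x(i := y) \<in> topspace (Dpow (below_eq i))"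
        using update_in_topspace_Dpow[OF x] i by (simp add: below_eq_def)
      then show ?thesis
        using H(3) restriction_preserving_update_top(1)[OF i H(2) x] by (auto simp: fiber_def u)
    qed
    then have "(\<lambda>y. initial_segment m (\<lambda>n. of_bool (H (x(i := y)) i n))) ` Y
        \<subseteq> initial_segment m ` proj_at (fiber U i u) i"
      by (auto simp: proj_at_def)
    from card_mono[OF finite_initial_segments_proj_at this]
    show "N < card (initial_segment m ` proj_at (fiber U i u) i)"
      using m[OF x] Y_card by (simp add: card_image)
  qed
qed

lemma IPS_top_coordinate_nonconstant:
  assumes i: "i \<in> Tnodes" and U: "U \<in> IPS (below_eq i)"
  obtains u u' where "u \<in> U" "u' \<in> U" "u i \<noteq> u' i"
proof -
  obtain H where H: "restriction_preserving (below_eq i) H" "H ` topspace (Dpow (below_eq i)) = U"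
    using U unfolding IPS_iff_embedding_image IPS_embedding_def by blast
  define x where "x = (\<lambda>j\<in>below_eq i. \<lambda>n::nat. False)"
  have x: "x \<in> topspace (Dpow (below_eq i))"
    by (simp add: x_def topspace_Dpow)
  have x_upd: "x(i := y) \<in> topspace (Dpow (below_eq i))" for y
    using update_in_topspace_Dpow[OF x] i by (simp add: below_eq_def)
  have "H (x(i := (\<lambda>_. True))) i \<noteq> H (x(i := (\<lambda>_. False))) i"
    using restriction_preserving_update_top(2)[OF i H(1) x] unfolding inj_def by (metis (full_types))
  then show ?thesis using that x_upd H(2) by blast
qed

lemma IPS_below_eq_inj:
  assumes "i \<in> Tnodes" "i' \<in> Tnodes" "U \<in> IPS (below_eq i)" "U \<in> IPS (below_eq i')"
  shows "i = i'"
proof -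
  have "a \<in> below_eq b"
    if a: "a \<in> Tnodes" "U \<in> IPS (below_eq a)" and b: "U \<in> IPS (below_eq b)" for a b
  proof (rule ccontr)
    assume "a \<notin> below_eq b"
    obtain u u' where "u \<in> U" "u' \<in> U" "u a \<noteq> u' a"
      using a by (rule IPS_top_coordinate_nonconstant)
    moreover have "U \<subseteq> extensional (below_eq b)"
      using b by (auto simp: IPS_def topspace_Dpow PiE_def)
    ultimately show False
      using \<open>a \<notin> below_eq b\<close> by (metis extensional_arb subsetD)
  qed
  then have "prefix i i'" "prefix i' i"
    using assms by (auto simp: below_eq_def)
  then show ?thesis by (rule prefix_order.antisym)
qed

lemma IPS_fiber_initial_segments_card_gt_uniform:
  fixes N :: "('o list \<Rightarrow> nat \<Rightarrow> bool) set \<Rightarrow> nat"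
  obtains len where "\<And>i U u. i \<in> Tnodes \<Longrightarrow> U \<in> IPS (below_eq i) \<Longrightarrow> u \<in> U \<Longrightarrow>
    N U < card (initial_segment (len U) ` proj_at (fiber U i u) i)"
proof -
  have "\<forall>U. \<exists>m. \<forall>i\<in>Tnodes. U \<in> IPS (below_eq i) \<longrightarrow>
      (\<forall>u\<in>U. N U < card (initial_segment m ` proj_at (fiber U i u) i))"
  proof
    fix U
    show "\<exists>m. \<forall>i\<in>Tnodes. U \<in> IPS (below_eq i) \<longrightarrow>
      (\<forall>u\<in>U. N U < card (initial_segment m ` proj_at (fiber U i u) i))"
    proof (cases "\<exists>i\<in>Tnodes. U \<in> IPS (below_eq i)")
      case True
      then obtain i where i: "i \<in> Tnodes" "U \<in> IPS (below_eq i)" by blast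
      then obtain m where "\<And>u. u \<in> U \<Longrightarrow> N U < card (initial_segment m ` proj_at (fiber U i u) i)"
        by (rule IPS_fiber_initial_segments_card_gt) blast
      then show ?thesis using IPS_below_eq_inj[OF i(1) _ i(2)] by blast
    qed blast
  qed
  from choice[OF this] obtain len where
    "\<forall>U. \<forall>i\<in>Tnodes. U \<in> IPS (below_eq i) \<longrightarrow> (\<forall>u\<in>U. N U < card (initial_segment (len U) ` proj_at (fiber U i u) i))"
    by blast
  then show ?thesis using that by blast
qed

section \<open>Avoidability\<close>

lemma openin_initial_segment_at:
  assumes "i \<in> \<zeta>" "U \<subseteq> topspace (Dpow \<zeta>)"
  shows "openin (subtopology (Dpow \<zeta>) U) {v \<in> U. initial_segment m (\<lambda>n. of_bool (v i n) :: nat) \<in> P}"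
proof (rule openin_finitely_determined[of "{..<m}" _ "\<lambda>n v. v i n"])
  fix n
  show "continuous_map (subtopology (Dpow \<zeta>) U) (discrete_topology UNIV) (\<lambda>v. v i n)"
    by (rule continuous_map_from_subtopology[OF continuous_map_Dpow_bit[OF assms(1)]])
next
  fix v v' assume v: "v \<in> {v \<in> U. initial_segment m (\<lambda>n. of_bool (v i n)) \<in> P}"
    and v': "v' \<in> topspace (subtopology (Dpow \<zeta>) U)" "\<forall>n\<in>{..<m}. v' i n = v i n"
  have "initial_segment m (\<lambda>n. of_bool (v' i n) :: nat) = initial_segment m (\<lambda>n. of_bool (v i n))"
    using v'(2) by (simp add: initial_segment_eq_iff)
  moreover have "initial_segment m (\<lambda>n. of_bool (v i n)) \<in> P" using v by simp
  ultimately show "v' \<in> {v \<in> U. initial_segment m (\<lambda>n. of_bool (v i n)) \<in> P}"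
    using v'(1) assms(2) by auto
qed (use assms(2) in auto)

lemma avoidable_if_few_initial_segments:
  assumes i: "i \<in> Tnodes" and U: "U \<subseteq> topspace (Dpow (below_eq i))"
    and fin: "finite (initial_segment m ` S)"
    and few: "\<And>u. u \<in> U \<Longrightarrow> card (initial_segment m ` S) < card (initial_segment m ` proj_at (fiber U i u) i)"
  shows "avoidable S U i"
proof -
  define V where "V = {v \<in> U. initial_segment m (\<lambda>n. of_bool (v i n)) \<in> - initial_segment m ` S}"
  have i_in: "i \<in> below_eq i" using i by (simp add: below_eq_def)
  have "openin (subtopology (Dpow (below_eq i)) U) V"
    unfolding V_def by (rule openin_initial_segment_at[OF i_in U])
  moreover have "closedin (subtopology (Dpow (below_eq i)) U) V"
  proof -
    have "topspace (subtopology (Dpow (below_eq i)) U) - V =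
        {v \<in> U. initial_segment m (\<lambda>n. of_bool (v i n)) \<in> initial_segment m ` S}"
      using U by (auto simp: V_def)
    then show ?thesis
      using openin_initial_segment_at[OF i_in U] U unfolding closedin_def V_def by auto
  qed
  moreover have "restrict u (below i) \<in> (\<lambda>v. restrict v (below i)) ` V" if "u \<in> U" for u
  proof -
    have "\<not> initial_segment m ` proj_at (fiber U i u) i \<subseteq> initial_segment m ` S"
      using few[OF that] card_mono[OF fin] by (meson not_le)
    then obtain v where "v \<in> fiber U i u" "initial_segment m (\<lambda>n. of_bool (v i n)) \<notin> initial_segment m ` S"
      by (auto simp: proj_at_def)
    then have "v \<in> V" "restrict v (below i) = restrict u (below i)"
      by (auto simp: fiber_def V_def)
    then show ?thesis by (metis image_eqI)
  qed
  then have "(\<lambda>v. restrict v (below i)) ` V = (\<lambda>u. restrict u (below i)) ` U"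
    by (auto simp: V_def)
  moreover have "S \<inter> proj_at V i = {}"
    by (auto simp: V_def proj_at_def)
  ultimately show ?thesis
    unfolding avoidable_def by (metis (no_types, lifting) V_def mem_Collect_eq subsetI)
qed

section \<open>Thinning by interleaving\<close>

definition interleave :: "(nat \<Rightarrow> nat) \<Rightarrow> nat \<Rightarrow> (nat \<Rightarrow> bool) \<Rightarrow> nat \<Rightarrow> bool" where
  "interleave \<sigma> a y b \<longleftrightarrow> (\<exists>n. b = \<sigma> (prod_encode (a, n)) \<and> y n)"

lemma interleave_at: "inj \<sigma> \<Longrightarrow> interleave \<sigma> a y (\<sigma> (prod_encode (a, n))) = y n"
  by (auto simp: interleave_def inj_eq prod_encode_eq)

lemma inj_interleave:
  assumes "inj \<sigma>"
  shows "inj (interleave \<sigma> a)"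
proof (rule injI)
  fix y y' assume "interleave \<sigma> a y = interleave \<sigma> a y'"
  then have "interleave \<sigma> a y (\<sigma> (prod_encode (a, n))) = interleave \<sigma> a y' (\<sigma> (prod_encode (a, n)))" for n
    by simp
  then show "y = y'" by (simp add: interleave_at[OF assms] fun_eq_iff)
qed

lemma continuous_map_interleave:
  assumes "inj \<sigma>"
  shows "continuous_map cantor_top cantor_top (interleave \<sigma> a)"
  unfolding continuous_map_cantor_iff
proof
  fix b
  show "continuous_map cantor_top (discrete_topology UNIV) (\<lambda>y. interleave \<sigma> a y b)"
  proof (cases "\<exists>n. b = \<sigma> (prod_encode (a, n))")
    case True
    then obtain n where "b = \<sigma> (prod_encode (a, n))" ..
    then show ?thesis
      using continuous_map_id[of cantor_top] unfolding continuous_map_cantor_iff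
      by (simp add: interleave_at[OF assms])
  next
    case False
    then show ?thesis by (simp add: interleave_def)
  qed
qed

lemma interleave_eq_on_initial_bits:
  assumes "\<And>c. k \<le> c \<Longrightarrow> B < \<sigma> c" "\<And>n. prod_encode (a, n) < k \<Longrightarrow> y n = y' n" "b \<le> B"
  shows "interleave \<sigma> a y b = interleave \<sigma> a y' b"
proof -
  have "y n = y' n" if "b = \<sigma> (prod_encode (a, n))" for n
    using assms that by (metis not_le)
  then show ?thesis by (auto simp: interleave_def)
qed

lemma few_initial_segments_interleaved:
  assumes idx: "inj_on idx \<zeta>" and \<sigma>: "\<And>c. k \<le> c \<Longrightarrow> B < \<sigma> c"
    and \<Phi>: "\<And>x x'. x \<in> topspace (Dpow \<zeta>) \<Longrightarrow> x' \<in> topspace (Dpow \<zeta>) \<Longrightarrow>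
      \<forall>j\<in>\<zeta>. \<forall>b\<le>B. x' j b = x j b \<Longrightarrow> initial_segment L (\<Phi> x') = initial_segment L (\<Phi> x)"
  shows "finite (initial_segment L ` \<Phi> ` (\<lambda>x. \<lambda>j\<in>\<zeta>. interleave \<sigma> (idx j) (x j)) ` topspace (Dpow \<zeta>))"
    and "card (initial_segment L ` \<Phi> ` (\<lambda>x. \<lambda>j\<in>\<zeta>. interleave \<sigma> (idx j) (x j)) ` topspace (Dpow \<zeta>))
      \<le> 2 ^ k"
proof -
  let ?S = "initial_segment L ` \<Phi> ` (\<lambda>x. \<lambda>j\<in>\<zeta>. interleave \<sigma> (idx j) (x j)) ` topspace (Dpow \<zeta>)"
  define G where "G = (\<lambda>x. \<lambda>j\<in>\<zeta>. interleave \<sigma> (idx j) (x j))"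
  have G_top: "G x \<in> topspace (Dpow \<zeta>)" for x by (simp add: G_def topspace_Dpow)
  define P where "P = {(j, n). j \<in> \<zeta> \<and> prod_encode (idx j, n) < k}"
  have code_inj: "inj_on (\<lambda>(j, n). prod_encode (idx j, n)) P"
    using idx by (auto simp: P_def inj_on_def prod_encode_eq)
  have code_range: "(\<lambda>(j, n). prod_encode (idx j, n)) ` P \<subseteq> {..<k}"
    by (auto simp: P_def)
  have P_fin: "finite P" using inj_on_finite[OF code_inj code_range] by simp
  have P_card: "card P \<le> k" using card_inj_on_le[OF code_inj code_range] by simp
  define point where "point Z = (\<lambda>j\<in>\<zeta>. \<lambda>n::nat. (j, n) \<in> Z)" for Z
  \<comment> \<open>Below \<open>B\<close>, \<open>G x\<close> only sees the bits of \<open>x\<close> in the index set \<open>P\<close> of size at most \<open>k\<close>.\<close>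
  have "initial_segment L (\<Phi> (G x)) = initial_segment L (\<Phi> (G (point {(j, n) \<in> P. x j n})))" for x
  proof -
    let ?Z = "{(j, n) \<in> P. x j n}"
    have agree: "G x j b = G (point ?Z) j b" if j: "j \<in> \<zeta>" and b: "b \<le> B" for j b
    proof -
      have "interleave \<sigma> (idx j) (x j) b = interleave \<sigma> (idx j) (point ?Z j) b"
        by (rule interleave_eq_on_initial_bits[OF \<sigma> _ b]) (auto simp: point_def P_def j)
      then show ?thesis by (simp add: G_def j)
    qed
    show ?thesis by (rule \<Phi>[OF G_top G_top]) (use agree in blast)
  qed
  then have sub: "?S \<subseteq> (\<lambda>Z. initial_segment L (\<Phi> (G (point Z)))) ` Pow P" (is "_ \<subseteq> ?J")
    unfolding G_def[symmetric] by auto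
  have J_fin: "finite ?J" using P_fin by simp
  then show "finite ?S" using sub by (rule finite_subset[rotated])
  have "card ?S \<le> card ?J" by (rule card_mono[OF J_fin sub])
  also have "\<dots> \<le> card (Pow P)" using P_fin by (simp add: card_image_le)
  also have "\<dots> = 2 ^ card P" using P_fin by (rule card_Pow)
  also have "\<dots> \<le> 2 ^ k" using P_card by (rule power_increasing) simp
  finally show "card ?S \<le> 2 ^ k" .
qed

lemma Dpow_thinning:
  assumes "countable \<zeta>" "continuous_map (Dpow \<zeta>) baire_top \<Phi>"
  obtains G where "IPS_embedding \<zeta> G"
    "\<And>k. finite (initial_segment (L k) ` \<Phi> ` G ` topspace (Dpow \<zeta>))"
    "\<And>k. card (initial_segment (L k) ` \<Phi> ` G ` topspace (Dpow \<zeta>)) \<le> 2 ^ k"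
proof -
  have "\<forall>k. \<exists>B. \<forall>x\<in>topspace (Dpow \<zeta>). \<forall>x'\<in>topspace (Dpow \<zeta>).
      (\<forall>j\<in>\<zeta>. \<forall>b\<le>B. x' j b = x j b) \<longrightarrow> initial_segment (L k) (\<Phi> x') = initial_segment (L k) (\<Phi> x)"
  proof
    fix k
    show "\<exists>B. \<forall>x\<in>topspace (Dpow \<zeta>). \<forall>x'\<in>topspace (Dpow \<zeta>). (\<forall>j\<in>\<zeta>. \<forall>b\<le>B. x' j b = x j b)
        \<longrightarrow> initial_segment (L k) (\<Phi> x') = initial_segment (L k) (\<Phi> x)"
      by (rule Dpow_uniformly_continuous[OF assms(2)]) blast
  qed
  from choice[OF this] obtain B where B: "\<forall>k. \<forall>x\<in>topspace (Dpow \<zeta>). \<forall>x'\<in>topspace (Dpow \<zeta>).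
      (\<forall>j\<in>\<zeta>. \<forall>b\<le>B k. x' j b = x j b) \<longrightarrow> initial_segment (L k) (\<Phi> x') = initial_segment (L k) (\<Phi> x)"
    by blast
  define \<sigma> where "\<sigma> c = Suc (c + (\<Sum>c'\<le>c. B c'))" for c
  have "strict_mono \<sigma>"
    by (rule strict_mono_Suc_iff[THEN iffD2]) (simp add: \<sigma>_def)
  then have \<sigma>_inj: "inj \<sigma>" by (rule strict_mono_imp_inj_on)
  have \<sigma>_large: "B k < \<sigma> c" if "k \<le> c" for k c
    using member_le_sum[of k "{..c}" B] that by (simp add: \<sigma>_def)
  define idx where "idx = to_nat_on \<zeta>"
  have idx_inj: "inj_on idx \<zeta>" unfolding idx_def using assms(1) by (rule inj_on_to_nat_on)
  define G where "G = (\<lambda>x. \<lambda>j\<in>\<zeta>. interleave \<sigma> (idx j) (x j))"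
  have G_emb: "IPS_embedding \<zeta> G"
    unfolding G_def
    by (rule coordinatewise_map_Dpow[OF continuous_map_interleave[OF \<sigma>_inj] inj_interleave[OF \<sigma>_inj]])
  have B_k: "initial_segment (L k) (\<Phi> x') = initial_segment (L k) (\<Phi> x)"
    if "x \<in> topspace (Dpow \<zeta>)" "x' \<in> topspace (Dpow \<zeta>)" "\<forall>j\<in>\<zeta>. \<forall>b\<le>B k. x' j b = x j b" for k x x'
    using B that by blast
  have G_fin: "finite (initial_segment (L k) ` \<Phi> ` G ` topspace (Dpow \<zeta>))" for k
    unfolding G_def using idx_inj \<sigma>_large B_k by (rule few_initial_segments_interleaved(1))
  have G_card: "card (initial_segment (L k) ` \<Phi> ` G ` topspace (Dpow \<zeta>)) \<le> 2 ^ k" for k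
    unfolding G_def using idx_inj \<sigma>_large B_k by (rule few_initial_segments_interleaved(2))
  show ?thesis by (rule that[OF G_emb G_fin G_card])
qed

lemma IPS_thinning:
  assumes "countable \<xi>" "X \<in> IPS \<xi>" "continuous_map (Dpow \<xi>) baire_top F"
  obtains Y where "Y \<in> IPS \<xi>" "Y \<subseteq> X"
    "\<And>k. finite (initial_segment (L k) ` F ` Y)" "\<And>k. card (initial_segment (L k) ` F ` Y) \<le> 2 ^ k"
proof -
  obtain H where H: "IPS_embedding \<xi> H" and X: "X = H ` topspace (Dpow \<xi>)"
    using assms(2) unfolding IPS_iff_embedding_image by blast
  have "continuous_map (Dpow \<xi>) baire_top (F \<circ> H)"
    using H assms(3) unfolding IPS_embedding_def by (blast intro: continuous_map_compose)
  then obtain G where G: "IPS_embedding \<xi> G"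
    and few: "\<And>k. finite (initial_segment (L k) ` (F \<circ> H) ` G ` topspace (Dpow \<xi>))"
      "\<And>k. card (initial_segment (L k) ` (F \<circ> H) ` G ` topspace (Dpow \<xi>)) \<le> 2 ^ k"
    by (rule Dpow_thinning[OF assms(1), where L = L]) blast
  have FY: "F ` (H \<circ> G) ` topspace (Dpow \<xi>) = (F \<circ> H) ` G ` topspace (Dpow \<xi>)"
    by (simp add: image_comp)
  show ?thesis
  proof (rule that)
    show "(H \<circ> G) ` topspace (Dpow \<xi>) \<in> IPS \<xi>"
      unfolding IPS_iff_embedding_image using IPS_embedding_comp[OF H G] by blast
    show "(H \<circ> G) ` topspace (Dpow \<xi>) \<subseteq> X"
      using G continuous_map_image_subset_topspace unfolding X IPS_embedding_def by fastforce
  qed (use few in \<open>simp_all only: FY\<close>)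
qed

theorem theorem3p18:
  fixes \<xi> :: "'o::wellorder list set"
    and X :: "('o list \<Rightarrow> nat \<Rightarrow> bool) set"
    and F :: "('o list \<Rightarrow> nat \<Rightarrow> bool) \<Rightarrow> (nat \<Rightarrow> nat)"
    and \<U> :: "('o list \<Rightarrow> nat \<Rightarrow> bool) set set"
  assumes omega1_uncountable: "uncountable (UNIV :: 'o set)"
    and omega1_segments: "\<forall>a::'o. countable {b. b < a}"
    and "\<xi> \<in> Xi"
    and "X \<in> IPS \<xi>"
    and "continuous_map (Dpow \<xi>) baire_top F"
    and "countable \<U>"
    and "\<U> \<subseteq> (\<Union>i\<in>Tnodes. IPS (below_eq i))"
  shows "\<exists>Y\<in>IPS \<xi>. Y \<subseteq> X \<and>
           (\<forall>i\<in>Tnodes. \<forall>U\<in>IPS (below_eq i) \<inter> \<U>. avoidable (F ` Y) U i)"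
proof -
  obtain len where len: "\<And>i U u. i \<in> Tnodes \<Longrightarrow> U \<in> IPS (below_eq i) \<Longrightarrow> u \<in> U \<Longrightarrow>
      2 ^ to_nat_on \<U> U < card (initial_segment (len U) ` proj_at (fiber U i u) i)"
    by (rule IPS_fiber_initial_segments_card_gt_uniform[of "\<lambda>U. 2 ^ to_nat_on \<U> U"]) blast
  have "countable \<xi>" using \<open>\<xi> \<in> Xi\<close> by (simp add: Xi_def)
  then obtain Y where Y: "Y \<in> IPS \<xi>" "Y \<subseteq> X"
    and few: "\<And>k. finite (initial_segment (len (from_nat_into \<U> k)) ` F ` Y)"
      "\<And>k. card (initial_segment (len (from_nat_into \<U> k)) ` F ` Y) \<le> 2 ^ k"
    using \<open>X \<in> IPS \<xi>\<close> assms(5)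
    by (rule IPS_thinning[where L = "\<lambda>k. len (from_nat_into \<U> k)"]) blast
  have "avoidable (F ` Y) U i" if i: "i \<in> Tnodes" and U: "U \<in> IPS (below_eq i)" "U \<in> \<U>" for i U
  proof (rule avoidable_if_few_initial_segments[OF i])
    show "U \<subseteq> topspace (Dpow (below_eq i))" using U(1) by (simp add: IPS_def)
    have U_index: "from_nat_into \<U> (to_nat_on \<U> U) = U" using \<open>countable \<U>\<close> U(2) by simp
    show "finite (initial_segment (len U) ` F ` Y)"
      using few(1)[of "to_nat_on \<U> U"] by (simp only: U_index)
    show "card (initial_segment (len U) ` F ` Y) < card (initial_segment (len U) ` proj_at (fiber U i u) i)"
      if "u \<in> U" for u
      using few(2)[of "to_nat_on \<U> U"] len[OF i U(1) that] by (simp only: U_index)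
  qed
  with Y show ?thesis by blast
qed

end
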